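(* Let $T$ be a plane labelled bipartite tree with $n$ white and $m$ black vertices, where $n+m$ is even. Then the value $i(T)\in\{0,1\}$ does not depend on which white vertex is chosen as the root vertex (nor on the root edge at it). Consequently the parity (even/odd) of $T$ is well defined.
   Context: A plane labelled bipartite tree with $n$ white and $m$ black vertices is defined as follows. It is a finite tree embedded in the oriented plane, considered up to orientation-preserving homeomorphism. Its vertices are colored white and black so that adjacent vertices have different colors. The white vertices carry the distinct labels $v_1,\dots,v_n$ and the black vertices the distinct labels $u_1,\dots,u_m$. String $c(T)$: choose a white vertex $v_i$ (the root vertex) and an edge $e$ incident to it (the root edge). Walk counterclockwise around $T$, i.e. perform the contour walk around the tree keeping the tree on the left, starting at $v_i$ and first traversing $e$, until returning to $v_i$ after all edges have been traversed twice. Whenever a vertex is met for the first time, write its label. Whenever a vertex is met for the last time, write a closing bracket ")". For example, for the path $v_1-u_1-v_2-u_2$ rooted at $v_1$, $c(T)=v_1u_1v_2u_2))))$. The string contains $n+m$ labels and $n+m$ brackets. Invariant: let - $a$ be the number of pairs of white labels $v_k,v_l$ with $v_k$ occurring before $v_l$ in $c(T)$ and $k>l$; - $b$ be the analogous number of inversions among black labels $u_k$; - $c$ be the number of pairs (black label $u$, white label $v$) with $u$ occurring before $v$ in $c(T)$; - $d$ be the number of pairs (closing bracket, label) with the bracket occurring before the label in $c(T)$; - $e_0=|n-m|/2$. Then $i(T)\in\{0,1\}$ is defined by $i(T)\equiv a+b+c+\tfrac{d+e_0}{2}\pmod 2$. The tree is called even if $i(T)=0$ and odd if $i(T)=1$.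 *)

theory Defs
  imports Main
begin

text \<open>Vertices of a labelled bipartite tree: white vertex W i carries label v_i,
black vertex B j carries label u_j (labels are 1-based).\<close>
datatype vtx = W nat | B nat

datatype tok = Lab vtx | Close

text \<open>The tree is given by its edge set E: (i,j) \<in> E means v_i is joined to u_j.\<close>
definition vertices :: "nat \<Rightarrow> nat \<Rightarrow> vtx set" where
  "vertices n m = W ` {1..n} \<union> B ` {1..m}"

definition adj :: "(nat \<times> nat) set \<Rightarrow> (vtx \<times> vtx) set" where
  "adj E = {(W i, B j) | i j. (i, j) \<in> E} \<union> {(B j, W i) | i j. (i, j) \<in> E}"

definition nbrs :: "(nat \<times> nat) set \<Rightarrow> vtx \<Rightarrow> vtx set" where
  "nbrs E x = {y. (x, y) \<in> adj E}"

definition is_tree :: "nat \<Rightarrow> nat \<Rightarrow> (nat \<times> nat) set \<Rightarrow> bool" where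
  "is_tree n m E \<longleftrightarrow> E \<subseteq> {1..n} \<times> {1..m} \<and> card E + 1 = n + m
     \<and> (\<forall>x\<in>vertices n m. \<forall>y\<in>vertices n m. (x, y) \<in> (adj E)\<^sup>*)"

text \<open>Plane structure (rotation system): rot x is the counterclockwise successor
permutation of the neighbours of x; it must be a single cycle on nbrs E x.
A plane labelled tree up to orientation preserving homeomorphism is exactly a
labelled tree together with such a rotation system.\<close>
definition is_rotation :: "(nat \<times> nat) set \<Rightarrow> (vtx \<Rightarrow> vtx \<Rightarrow> vtx) \<Rightarrow> bool" where
  "is_rotation E rot \<longleftrightarrow> (\<forall>x. bij_betw (rot x) (nbrs E x) (nbrs E x)
     \<and> (\<forall>y\<in>nbrs E x. \<forall>z\<in>nbrs E x. \<exists>k. (rot x ^^ k) y = z))"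

definition plane_tree :: "nat \<Rightarrow> nat \<Rightarrow> (nat \<times> nat) set \<Rightarrow> (vtx \<Rightarrow> vtx \<Rightarrow> vtx) \<Rightarrow> bool" where
  "plane_tree n m E rot \<longleftrightarrow> is_tree n m E \<and> is_rotation E rot"

text \<open>Contour walk: after traversing the edge (u,w) (a dart), the walk continues
from w along the edge to rot w u.\<close>
definition step :: "(vtx \<Rightarrow> vtx \<Rightarrow> vtx) \<Rightarrow> vtx \<times> vtx \<Rightarrow> vtx \<times> vtx" where
  "step rot d = (snd d, rot (snd d) (fst d))"

definition occ :: "(vtx \<Rightarrow> vtx \<Rightarrow> vtx) \<Rightarrow> vtx \<Rightarrow> vtx \<Rightarrow> nat \<Rightarrow> vtx" where
  "occ rot r e t = fst ((step rot ^^ t) (r, e))"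

definition cstring :: "nat \<Rightarrow> nat \<Rightarrow> (vtx \<Rightarrow> vtx \<Rightarrow> vtx) \<Rightarrow> vtx \<Rightarrow> vtx \<Rightarrow> tok list" where
  "cstring n m rot r e =
    (let L = 2 * (n + m - 1); x = occ rot r e in
     concat (map (\<lambda>t. (if (\<forall>s<t. x s \<noteq> x t) then [Lab (x t)] else [])
                    @ (if (\<forall>s\<in>{t<..L}. x s \<noteq> x t) then [Close] else [])) [0..<L+1]))"

definition count_pairs :: "tok list \<Rightarrow> (tok \<Rightarrow> tok \<Rightarrow> bool) \<Rightarrow> nat" where
  "count_pairs cs P = card {(p, q). p < q \<and> q < length cs \<and> P (cs ! p) (cs ! q)}"

definition inv_a :: "tok list \<Rightarrow> nat" where
  "inv_a cs = count_pairs cs (\<lambda>s t. \<exists>k l. s = Lab (W k) \<and> t = Lab (W l) \<and> k > l)"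

definition inv_b :: "tok list \<Rightarrow> nat" where
  "inv_b cs = count_pairs cs (\<lambda>s t. \<exists>k l. s = Lab (B k) \<and> t = Lab (B l) \<and> k > l)"

definition inv_c :: "tok list \<Rightarrow> nat" where
  "inv_c cs = count_pairs cs (\<lambda>s t. \<exists>k l. s = Lab (B k) \<and> t = Lab (W l))"

definition inv_d :: "tok list \<Rightarrow> nat" where
  "inv_d cs = count_pairs cs (\<lambda>s t. s = Close \<and> (\<exists>y. t = Lab y))"

definition iT :: "nat \<Rightarrow> nat \<Rightarrow> (vtx \<Rightarrow> vtx \<Rightarrow> vtx) \<Rightarrow> vtx \<Rightarrow> vtx \<Rightarrow> nat" where
  "iT n m rot r e =
    (let cs = cstring n m rot r e;
         e0 = (if n \<ge> m then n - m else m - n) div 2 in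
     (inv_a cs + inv_b cs + inv_c cs + (inv_d cs + e0) div 2) mod 2)"

end

theory Submission
  imports Defs
begin

text \<open>The contour walk is a cyclic sequence of the $2(n+m-1)$ darts of $T$ in which every dart
  occurs once, and its vertices alternate in colour; so any two rootings at white vertices differ
  by an even number of steps of the walk. Advancing the root by one step, from the dart $(r, e)$ to
  $(e, \mathit{rot}\ e\ r)$, turns $c(T) = r\,A\,)\,R\,)$ into $A\,r\,R\,)\,)$, where $A\,)$ is
  written during the excursion into the branch behind $e$. Each pair of distinct labels is counted
  in exactly one of $a, b, c$ in exactly one of its two orders, so $a + b + c$ changes by the number
  $|A|$ of labels of $A$ modulo 2, while $d$ changes by $2|A| - (n+m)$. Hence one step changes
  $i(T)$ by $(n+m)/2$ modulo 2, and two steps leave it unchanged.\<close>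

section \<open>Counting pairs in strings\<close>

lemma count_pairs_Nil [simp]: "count_pairs [] P = 0"
  by (simp add: count_pairs_def)

lemma count_pairs_Cons:
  "count_pairs (c # cs) P = length (filter (P c) cs) + count_pairs cs P"
proof -
  let ?S = "{(p, q). p < q \<and> q < length (c # cs) \<and> P ((c # cs) ! p) ((c # cs) ! q)}"
  let ?A = "{i. i < length cs \<and> P c (cs ! i)}"
  let ?B = "{(p, q). p < q \<and> q < length cs \<and> P (cs ! p) (cs ! q)}"
  have split: "?S = (\<lambda>i. (0, Suc i)) ` ?A \<union> (\<lambda>(p, q). (Suc p, Suc q)) ` ?B"
  proof (rule set_eqI, clarify)
    fix p q
    show "((p, q) \<in> ?S) = ((p, q) \<in> (\<lambda>i. (0, Suc i)) ` ?A \<union> (\<lambda>(p, q). (Suc p, Suc q)) ` ?B)"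
      by (cases p; cases q) (auto simp: image_iff)
  qed
  have "finite ?B"
    by (rule finite_subset[of _ "{..<length cs} \<times> {..<length cs}"]) auto
  then have "card ?S = card ((\<lambda>i. (0::nat, Suc i)) ` ?A) + card ((\<lambda>(p, q). (Suc p, Suc q)) ` ?B)"
    unfolding split by (intro card_Un_disjoint) auto
  also have "\<dots> = card ?A + card ?B"
    by (subst card_image, simp add: inj_on_def, subst card_image) (auto simp: inj_on_def)
  finally show ?thesis
    unfolding count_pairs_def by (simp add: length_filter_conv_card)
qed

definition cross_pairs :: "(tok \<Rightarrow> tok \<Rightarrow> bool) \<Rightarrow> tok list \<Rightarrow> tok list \<Rightarrow> nat" where
  "cross_pairs P xs ys = (\<Sum>x\<leftarrow>xs. length (filter (P x) ys))"

lemma cross_pairs_simps [simp]: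
  "cross_pairs P [] ys = 0"
  "cross_pairs P (x # xs) ys = length (filter (P x) ys) + cross_pairs P xs ys"
  "cross_pairs P (xs @ zs) ys = cross_pairs P xs ys + cross_pairs P zs ys"
  "cross_pairs P xs [] = 0"
  "cross_pairs P xs (y # ys) = length (filter (\<lambda>x. P x y) xs) + cross_pairs P xs ys"
  "cross_pairs P xs (ys @ zs) = cross_pairs P xs ys + cross_pairs P xs zs"
  by (induct xs) (auto simp: cross_pairs_def)

lemma count_pairs_append:
  "count_pairs (xs @ ys) P = count_pairs xs P + count_pairs ys P + cross_pairs P xs ys"
  by (induct xs) (auto simp: count_pairs_Cons)

lemma count_pairs_move_root:
  "count_pairs (A @ v # R @ [c, c]) P + cross_pairs P [v] A + cross_pairs P [c] R
   = count_pairs (v # A @ c # R @ [c]) P + cross_pairs P A [v] + cross_pairs P R [c]"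
  by (simp add: count_pairs_append count_pairs_Cons)

definition num_labels :: "tok list \<Rightarrow> nat" where
  "num_labels xs = length (filter (\<lambda>t. t \<noteq> Close) xs)"

definition num_closes :: "tok list \<Rightarrow> nat" where
  "num_closes xs = length (filter (\<lambda>t. t = Close) xs)"

lemma num_labels_simps [simp]:
  "num_labels [] = 0" "num_labels (Lab v # xs) = Suc (num_labels xs)"
  "num_labels (Close # xs) = num_labels xs" "num_labels (xs @ ys) = num_labels xs + num_labels ys"
  by (simp_all add: num_labels_def)

lemma num_closes_simps [simp]:
  "num_closes [] = 0" "num_closes (Lab v # xs) = num_closes xs"
  "num_closes (Close # xs) = Suc (num_closes xs)" "num_closes (xs @ ys) = num_closes xs + num_closes ys"
  by (simp_all add: num_closes_def)

definition inv_a_rel :: "tok \<Rightarrow> tok \<Rightarrow> bool" where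
  "inv_a_rel = (\<lambda>s t. \<exists>k l. s = Lab (W k) \<and> t = Lab (W l) \<and> k > l)"

definition inv_b_rel :: "tok \<Rightarrow> tok \<Rightarrow> bool" where
  "inv_b_rel = (\<lambda>s t. \<exists>k l. s = Lab (B k) \<and> t = Lab (B l) \<and> k > l)"

definition inv_c_rel :: "tok \<Rightarrow> tok \<Rightarrow> bool" where
  "inv_c_rel = (\<lambda>s t. \<exists>k l. s = Lab (B k) \<and> t = Lab (W l))"

definition inv_d_rel :: "tok \<Rightarrow> tok \<Rightarrow> bool" where
  "inv_d_rel = (\<lambda>s t. s = Close \<and> t \<noteq> Close)"

lemma inv_eq_count_pairs:
  "inv_a cs = count_pairs cs inv_a_rel" "inv_b cs = count_pairs cs inv_b_rel"
  "inv_c cs = count_pairs cs inv_c_rel" "inv_d cs = count_pairs cs inv_d_rel"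
proof -
  have "(\<lambda>s t. s = Close \<and> (\<exists>y. t = Lab y)) = inv_d_rel"
    unfolding inv_d_rel_def by (intro ext) (metis tok.exhaust tok.simps(3))
  then show "inv_d cs = count_pairs cs inv_d_rel"
    unfolding inv_d_def by simp
qed (simp_all only: inv_a_def inv_b_def inv_c_def inv_a_rel_def inv_b_rel_def inv_c_rel_def)

lemma inv_abc_rel_exactly_one:
  assumes "a \<noteq> Lab v"
  shows "of_bool (inv_a_rel a (Lab v)) + of_bool (inv_a_rel (Lab v) a)
    + of_bool (inv_b_rel a (Lab v)) + of_bool (inv_b_rel (Lab v) a)
    + of_bool (inv_c_rel a (Lab v)) + of_bool (inv_c_rel (Lab v) a) = (of_bool (a \<noteq> Close) :: nat)"
proof (cases a)
  case (Lab y)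
  then show ?thesis
    using assms unfolding inv_a_rel_def inv_b_rel_def inv_c_rel_def by (cases y; cases v) auto
qed (simp add: inv_a_rel_def inv_b_rel_def inv_c_rel_def)

lemma cross_pairs_inv_abc:
  assumes "Lab v \<notin> set A"
  shows "cross_pairs inv_a_rel A [Lab v] + cross_pairs inv_a_rel [Lab v] A
    + cross_pairs inv_b_rel A [Lab v] + cross_pairs inv_b_rel [Lab v] A
    + cross_pairs inv_c_rel A [Lab v] + cross_pairs inv_c_rel [Lab v] A = num_labels A"
  using assms
proof (induct A)
  case (Cons a A)
  have a: "a \<noteq> Lab v" and A: "Lab v \<notin> set A"
    using Cons.prems by auto
  have split: "\<And>P. cross_pairs P (a # A) [Lab v] = of_bool (P a (Lab v)) + cross_pairs P A [Lab v]"
    "\<And>P. cross_pairs P [Lab v] (a # A) = of_bool (P (Lab v) a) + cross_pairs P [Lab v] A"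
    by simp_all
  have "num_labels (a # A) = of_bool (a \<noteq> Close) + num_labels A"
    by (cases a) simp_all
  then show ?case
    unfolding split using inv_abc_rel_exactly_one[OF a] Cons.hyps[OF A] by linarith
qed simp

lemma cross_pairs_inv_d:
  "cross_pairs inv_d_rel A [Lab v] = num_closes A"
  "cross_pairs inv_d_rel [Close] A = num_labels A"
  by (induct A) (auto simp: inv_d_rel_def num_closes_def num_labels_def)

definition i_value :: "nat \<Rightarrow> tok list \<Rightarrow> nat" where
  "i_value e0 cs = (inv_a cs + inv_b cs + inv_c cs + (inv_d cs + e0) div 2) mod 2"

lemma iT_eq_i_value:
  "iT n m rot r e = i_value ((if m \<le> n then n - m else m - n) div 2) (cstring n m rot r e)"
  by (simp add: iT_def i_value_def Let_def)

text \<open>Moving the root label $v$ behind the block $A$ of its first branch changes $a + b + c$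
  by the number of labels of $A$ modulo 2, and $d$ by twice that number minus $N$.\<close>
lemma i_value_move_root:
  assumes v: "Lab v \<notin> set A" and A: "num_labels A = num_closes A + 1"
    and N: "N = 1 + num_labels A + num_labels R" and "even N"
  shows "i_value e0 (A @ Lab v # R @ [Close, Close])
       = (i_value e0 (Lab v # A @ Close # R @ [Close]) + N div 2) mod 2"
proof -
  let ?S = "Lab v # A @ Close # R @ [Close]" and ?S' = "A @ Lab v # R @ [Close, Close]"
  note move = count_pairs_move_root[of A "Lab v" R Close]
  define before where "before = cross_pairs inv_a_rel A [Lab v]
    + cross_pairs inv_b_rel A [Lab v] + cross_pairs inv_c_rel A [Lab v]"
  define after where "after = cross_pairs inv_a_rel [Lab v] A
    + cross_pairs inv_b_rel [Lab v] A + cross_pairs inv_c_rel [Lab v] A"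
  have abc: "inv_a ?S' + inv_b ?S' + inv_c ?S' + after = inv_a ?S + inv_b ?S + inv_c ?S + before"
    using move[of inv_a_rel] move[of inv_b_rel] move[of inv_c_rel]
    unfolding before_def after_def inv_eq_count_pairs
    by (simp add: inv_a_rel_def inv_b_rel_def inv_c_rel_def)
  have labels: "before + after = num_labels A"
    using cross_pairs_inv_abc[OF v] unfolding before_def after_def by linarith
  have "inv_d ?S' + num_labels R = inv_d ?S + num_closes A"
    using move[of inv_d_rel] unfolding inv_eq_count_pairs
    by (simp add: cross_pairs_inv_d inv_d_rel_def num_labels_def num_closes_def)
  then have "inv_d ?S' + e0 + N = inv_d ?S + e0 + 2 * num_labels A"
    using A N by linarith
  then have "(inv_d ?S' + e0 + N) div 2 = (inv_d ?S + e0 + 2 * num_labels A) div 2"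
    by (simp only:)
  moreover obtain k where "N = 2 * k"
    using \<open>even N\<close> by blast
  ultimately have "(inv_d ?S' + e0) div 2 + N div 2 = (inv_d ?S + e0) div 2 + num_labels A"
    by simp
  then have "inv_a ?S' + inv_b ?S' + inv_c ?S' + (inv_d ?S' + e0) div 2 + N div 2
     = inv_a ?S + inv_b ?S + inv_c ?S + (inv_d ?S + e0) div 2 + 2 * before"
    using abc labels by linarith
  moreover have "\<And>y h z x :: nat. y + h = z + 2 * x \<Longrightarrow> y mod 2 = (z + h) mod 2"
    by presburger
  ultimately show ?thesis
    unfolding i_value_def mod_add_left_eq by blast
qed

definition occ_tokens :: "(nat \<Rightarrow> vtx) \<Rightarrow> nat \<Rightarrow> nat \<Rightarrow> tok list" where
  "occ_tokens x L t = (if \<forall>s<t. x s \<noteq> x t then [Lab (x t)] else [])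
                      @ (if \<forall>s\<in>{t<..L}. x s \<noteq> x t then [Close] else [])"

definition occ_string :: "(nat \<Rightarrow> vtx) \<Rightarrow> nat \<Rightarrow> tok list" where
  "occ_string x L = concat (map (occ_tokens x L) [0..<Suc L])"

lemma cstring_eq_occ_string: "cstring n m rot r e = occ_string (occ rot r e) (2 * (n + m - 1))"
  unfolding cstring_def occ_string_def occ_tokens_def Let_def by simp

lemma occ_tokens_eqI:
  "(\<forall>s<t. x s \<noteq> x t) = is_first \<Longrightarrow> (\<forall>s\<in>{t<..L}. x s \<noteq> x t) = is_last \<Longrightarrow>
    occ_tokens x L t = (if is_first then [Lab (x t)] else []) @ (if is_last then [Close] else [])"
  unfolding occ_tokens_def by simp

lemma occ_tokens_cong:
  "(\<forall>s<t. x s \<noteq> x t) = (\<forall>s<t'. y s \<noteq> y t') \<Longrightarrow>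
    (\<forall>s\<in>{t<..L}. x s \<noteq> x t) = (\<forall>s\<in>{t'<..L'}. y s \<noteq> y t') \<Longrightarrow> x t = y t' \<Longrightarrow>
    occ_tokens x L t = occ_tokens y L' t'"
  unfolding occ_tokens_def by simp

lemma upt_split: "i \<le> j \<Longrightarrow> j \<le> k \<Longrightarrow> [i..<k] = [i..<j] @ [j..<k]"
  using upt_add_eq_append[of i j "k - j"] by simp

lemma concat_map_upt_Suc_shift:
  "(\<And>t. a \<le> t \<Longrightarrow> t < b \<Longrightarrow> f t = g (Suc t)) \<Longrightarrow>
    concat (map f [a..<b]) = concat (map g [Suc a..<Suc b])"
proof -
  assume "\<And>t. a \<le> t \<Longrightarrow> t < b \<Longrightarrow> f t = g (Suc t)"
  then have "map g (map Suc [a..<b]) = map f [a..<b]"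
    by auto
  then show ?thesis
    by (simp add: map_Suc_upt)
qed

lemma num_labels_occ_tokens:
  "num_labels (occ_tokens x L t) = (if \<forall>s<t. x s \<noteq> x t then 1 else 0)"
  and num_closes_occ_tokens:
  "num_closes (occ_tokens x L t) = (if \<forall>s\<in>{t<..L}. x s \<noteq> x t then 1 else 0)"
  unfolding occ_tokens_def by simp_all

lemma num_labels_concat: "num_labels (concat (map f xs)) = (\<Sum>t\<leftarrow>xs. num_labels (f t))"
  and num_closes_concat: "num_closes (concat (map f xs)) = (\<Sum>t\<leftarrow>xs. num_closes (f t))"
  by (induct xs) auto

lemma sum_list_indicator_upt:
  "(\<Sum>t\<leftarrow>[a..<b]. if P t then 1 else 0 :: nat) = card {t\<in>{a..<b}. P t}"
proof -
  have "(\<Sum>t\<leftarrow>[a..<b]. if P t then 1 else 0 :: nat) = (\<Sum>t\<in>{a..<b}. if P t then 1 else 0)"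
    by (simp add: sum_list_distinct_conv_sum_set)
  also have "\<dots> = card {t\<in>{a..<b}. P t}"
    by (simp add: sum.If_cases Int_def conj_commute)
  finally show ?thesis .
qed

lemma card_eq_card_image_if_representatives:
  assumes "inj_on f S" and "S \<subseteq> I" and "\<And>t. t \<in> I \<Longrightarrow> \<exists>s\<in>S. f s = f t"
  shows "card S = card (f ` I)"
proof -
  have "f ` I \<subseteq> f ` S"
  proof (rule image_subsetI)
    fix t assume "t \<in> I"
    then obtain s where "s \<in> S" "f s = f t"
      using assms(3) by blast
    then show "f t \<in> f ` S"
      by (metis imageI)
  qed
  moreover have "f ` S \<subseteq> f ` I"
    using assms(2) by (rule image_mono)
  ultimately have "f ` S = f ` I"
    by (rule subset_antisym[rotated])
  then show ?thesis
    using card_image[OF assms(1)] by simp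
qed

locale closed_block =
  fixes x :: "nat \<Rightarrow> 'a" and L :: nat and I :: "nat set"
  assumes block_le: "I \<subseteq> {0..L}"
    and block_closed: "\<And>t s. t \<in> I \<Longrightarrow> s \<le> L \<Longrightarrow> x s = x t \<Longrightarrow> s \<in> I"
begin

lemma card_first_occurrences: "card {t\<in>I. \<forall>s<t. x s \<noteq> x t} = card (x ` I)"
proof -
  let ?S = "{t\<in>I. \<forall>s<t. x s \<noteq> x t}"
  have inj: "inj_on x ?S"
    by (rule inj_onI) (metis (mono_tags, lifting) mem_Collect_eq nat_neq_iff)
  have "\<exists>t0\<in>?S. x t0 = x t" if "t \<in> I" for t
  proof -
    define t0 where "t0 = (LEAST s. x s = x t)"
    have "x t0 = x t"
      unfolding t0_def by (rule LeastI[where P = "\<lambda>s. x s = x t"]) (rule refl)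
    moreover have "t0 \<le> t"
      unfolding t0_def by (rule Least_le) (rule refl)
    moreover have "\<forall>s<t0. x s \<noteq> x t0"
    proof (intro allI impI)
      fix s assume "s < t0"
      then have "x s \<noteq> x t"
        unfolding t0_def by (rule not_less_Least)
      then show "x s \<noteq> x t0"
        using \<open>x t0 = x t\<close> by simp
    qed
    moreover have "t0 \<in> I"
    proof -
      have "t0 \<le> L"
        using \<open>t0 \<le> t\<close> that block_le by auto
      then show ?thesis
        using block_closed[OF that _ \<open>x t0 = x t\<close>] by blast
    qed
    ultimately show ?thesis
      by blast
  qed
  then show ?thesis
    using card_eq_card_image_if_representatives[OF inj] by blast
qed

lemma card_last_occurrences: "card {t\<in>I. \<forall>s\<in>{t<..L}. x s \<noteq> x t} = card (x ` I)"
proof -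
  let ?S = "{t\<in>I. \<forall>s\<in>{t<..L}. x s \<noteq> x t}"
  have inj: "inj_on x ?S"
  proof (rule inj_onI)
    fix a b assume a: "a \<in> ?S" and b: "b \<in> ?S" and ab: "x a = x b"
    have "a \<le> L" "b \<le> L"
      using a b block_le by auto
    show "a = b"
    proof (rule linorder_cases[of a b])
      assume "a < b"
      then have "b \<in> {a<..L}"
        using \<open>b \<le> L\<close> by simp
      then show ?thesis
        using a ab by auto
    next
      assume "b < a"
      then have "a \<in> {b<..L}"
        using \<open>a \<le> L\<close> by simp
      then show ?thesis
        using b ab by auto
    qed
  qed
  have "\<exists>t0\<in>?S. x t0 = x t" if "t \<in> I" for t
  proof -
    define M where "M = {s. s \<le> L \<and> x s = x t}"
    have "finite M" "t \<in> M"
      unfolding M_def using that block_le by auto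
    define t0 where "t0 = Max M"
    have "t0 \<in> M"
      unfolding t0_def using \<open>finite M\<close> \<open>t \<in> M\<close> by (intro Max_in) auto
    then have t0: "t0 \<le> L" "x t0 = x t"
      unfolding M_def by auto
    moreover have "\<forall>s\<in>{t0<..L}. x s \<noteq> x t0"
    proof
      fix s assume "s \<in> {t0<..L}"
      then have "s \<notin> M"
        using Max_ge[OF \<open>finite M\<close>] unfolding t0_def by fastforce
      then show "x s \<noteq> x t0"
        using \<open>s \<in> {t0<..L}\<close> t0 unfolding M_def by simp
    qed
    moreover have "t0 \<in> I"
      using block_closed[OF that t0] .
    ultimately show ?thesis
      by blast
  qed
  then show ?thesis
    using card_eq_card_image_if_representatives[OF inj] by blast
qed

end

lemma num_labels_occ_block:
  assumes "closed_block x L {a..<b}"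
  shows "num_labels (concat (map (occ_tokens x L) [a..<b])) = card (x ` {a..<b})"
proof -
  have "num_labels (concat (map (occ_tokens x L) [a..<b]))
      = (\<Sum>t\<leftarrow>[a..<b]. num_labels (occ_tokens x L t))"
    by (rule num_labels_concat)
  also have "\<dots> = card (x ` {a..<b})"
    unfolding num_labels_occ_tokens sum_list_indicator_upt
    using closed_block.card_first_occurrences[OF assms] by simp
  finally show ?thesis .
qed

lemma num_closes_occ_block:
  assumes "closed_block x L {a..<b}"
  shows "num_closes (concat (map (occ_tokens x L) [a..<b])) = card (x ` {a..<b})"
proof -
  have "num_closes (concat (map (occ_tokens x L) [a..<b]))
      = (\<Sum>t\<leftarrow>[a..<b]. num_closes (occ_tokens x L t))"
    by (rule num_closes_concat)
  also have "\<dots> = card (x ` {a..<b})"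
    unfolding num_closes_occ_tokens sum_list_indicator_upt
    using closed_block.card_last_occurrences[OF assms] by simp
  finally show ?thesis .
qed

lemma num_labels_occ_string: "num_labels (occ_string x L) = card (x ` {0..<Suc L})"
  unfolding occ_string_def by (rule num_labels_occ_block) (unfold_locales, auto)

lemma all_less_Suc_shift:
  "v \<noteq> x 0 \<Longrightarrow> (\<forall>s<t. x (Suc s) \<noteq> v) = (\<forall>s<Suc t. x s \<noteq> v)"
  by (auto simp: All_less_Suc2)

lemma all_after_Suc_shift:
  "(\<forall>s\<in>{t<..L}. x (Suc s) \<noteq> v) = (\<forall>s. Suc t < s \<and> s \<le> Suc L \<longrightarrow> x s \<noteq> v)"
  by (auto simp: Suc_less_eq2)
    (metis Suc_le_mono Suc_less_eq gr0_conv_Suc less_trans_Suc zero_less_Suc)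

section \<open>Advancing the root of a string\<close>

text \<open>The situation of a contour walk $x$ of length $L$ whose first excursion, into the branch
  behind the first edge, ends at time \<open>\<tau>\<close>: it leaves along the first edge at time $0$, comes back
  along it at time \<open>\<tau> - 1\<close>, and the vertices visited in between are never visited again.\<close>
locale first_return =
  fixes x :: "nat \<Rightarrow> vtx" and L p \<tau> :: nat
  defines "\<tau> \<equiv> Suc (Suc p)"
  assumes periodic: "x L = x 0" "x (Suc L) = x 1"
    and return_le: "\<tau> \<le> L"
    and return: "x \<tau> = x 0"
    and no_early_return: "\<And>t. 0 < t \<Longrightarrow> t < \<tau> \<Longrightarrow> x t \<noteq> x 0"
    and return_edge: "x (Suc p) = x 1"
    and branch_separated: "\<And>s t. 1 \<le> s \<Longrightarrow> s < \<tau> \<Longrightarrow> \<tau> \<le> t \<Longrightarrow> t \<le> L \<Longrightarrow> x s \<noteq> x t"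
begin

lemma first_edge_not_loop: "x 1 \<noteq> x 0"
  using no_early_return[of 1] by (simp add: \<tau>_def)

lemma occ_tokens_0: "occ_tokens x L 0 = [Lab (x 0)]"
  by (rule trans[OF occ_tokens_eqI[where is_first = True and is_last = False]])
    (use periodic return_le \<tau>_def in auto)

lemma occ_tokens_last: "occ_tokens x L L = [Close]" "occ_tokens (x \<circ> Suc) L L = [Close]"
  by (rule trans[OF occ_tokens_eqI[where is_first = False and is_last = True]];
      use periodic return_le \<tau>_def in \<open>auto intro!: exI[of _ 0]\<close>)+

lemma occ_tokens_Suc_in_branch:
  assumes "t < p"
  shows "occ_tokens (x \<circ> Suc) L t = occ_tokens x L (Suc t)"
proof (rule occ_tokens_cong)
  show "(\<forall>s<t. (x \<circ> Suc) s \<noteq> (x \<circ> Suc) t) = (\<forall>s<Suc t. x s \<noteq> x (Suc t))"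
    using no_early_return[of "Suc t"] assms \<tau>_def by (simp add: all_less_Suc_shift)
  have "x (Suc L) = x (Suc p)"
    using periodic return_edge by simp
  then show "(\<forall>s\<in>{t<..L}. (x \<circ> Suc) s \<noteq> (x \<circ> Suc) t) = (\<forall>s\<in>{Suc t<..L}. x s \<noteq> x (Suc t))"
    unfolding comp_apply all_after_Suc_shift using assms return_le \<tau>_def
    by (auto simp: le_Suc_eq)
qed simp

lemma occ_tokens_return_edge: "occ_tokens x L (Suc p) = occ_tokens (x \<circ> Suc) L p @ [Close]"
proof -
  have "x s \<noteq> x (Suc p)" if "s \<in> {Suc p<..L}" for s
    using branch_separated[of "Suc p" s] that \<tau>_def by auto
  then have "\<forall>s\<in>{Suc p<..L}. x s \<noteq> x (Suc p)"
    by blast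
  moreover have "(\<forall>s<p. x (Suc s) \<noteq> x (Suc p)) = (\<forall>s<Suc p. x s \<noteq> x (Suc p))"
    using no_early_return[of "Suc p"] \<tau>_def by (intro all_less_Suc_shift) auto
  moreover have "\<not> (\<forall>s\<in>{p<..L}. x (Suc s) \<noteq> x (Suc p))"
    using periodic return_edge return_le \<tau>_def by (auto intro!: bexI[of _ L])
  ultimately show ?thesis
    unfolding occ_tokens_def by simp
qed

definition branch :: "tok list" where
  "branch = concat (map (occ_tokens (x \<circ> Suc) L) [0..<Suc p])"

definition rest :: "tok list" where
  "rest = concat (map (occ_tokens x L) [\<tau>..<L])"

lemma branch_Close: "branch @ [Close] = concat (map (occ_tokens x L) [1..<\<tau>])"
proof -
  have "concat (map (occ_tokens (x \<circ> Suc) L) [0..<p]) = concat (map (occ_tokens x L) [Suc 0..<Suc p])"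
    by (rule concat_map_upt_Suc_shift) (simp add: occ_tokens_Suc_in_branch)
  moreover have "[Suc 0..<\<tau>] = [Suc 0..<Suc p] @ [Suc p]"
    unfolding \<tau>_def by (simp add: upt_Suc_append del: upt_Suc)
  ultimately show ?thesis
    unfolding branch_def using occ_tokens_return_edge by (simp add: upt_Suc_append del: upt_Suc)
qed

lemma closed_block_branch: "closed_block x L {1..<\<tau>}"
proof
  show "{1..<\<tau>} \<subseteq> {0..L}"
    using return_le by auto
  fix t s assume t: "t \<in> {1..<\<tau>}" and "s \<le> L" and "x s = x t"
  have "s \<noteq> 0"
  proof
    assume "s = 0"
    then show False
      using no_early_return[of t] t \<open>x s = x t\<close> by simp
  qed
  moreover have "\<not> \<tau> \<le> s"
    using branch_separated[of t s] t \<open>s \<le> L\<close> \<open>x s = x t\<close> by auto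
  ultimately show "s \<in> {1..<\<tau>}"
    by auto
qed

lemma num_labels_branch: "num_labels branch = num_closes branch + 1"
  using num_labels_occ_block[OF closed_block_branch] num_closes_occ_block[OF closed_block_branch]
  unfolding branch_Close[symmetric] by simp

lemma root_notin_branch: "Lab (x 0) \<notin> set branch"
proof
  assume "Lab (x 0) \<in> set branch"
  then have "Lab (x 0) \<in> set (concat (map (occ_tokens x L) [1..<\<tau>]))"
    unfolding branch_Close[symmetric] by simp
  then obtain t where "t \<in> {1..<\<tau>}" "Lab (x 0) \<in> set (occ_tokens x L t)"
    by auto
  moreover have "v = x t" if "Lab v \<in> set (occ_tokens x L t)" for v
    using that unfolding occ_tokens_def by (auto split: if_splits)
  ultimately show False
    using no_early_return[of t] by auto
qed

lemma occ_string_eq: "occ_string x L = Lab (x 0) # branch @ Close # rest @ [Close]"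
proof -
  have "[0..<Suc L] = [0..<1] @ [1..<\<tau>] @ [\<tau>..<L] @ [L..<Suc L]"
    using return_le \<tau>_def by (simp add: upt_split[symmetric] del: upt_Suc)
  then have "occ_string x L = occ_tokens x L 0 @ (branch @ [Close]) @ rest @ occ_tokens x L L"
    unfolding occ_string_def branch_Close rest_def by simp
  then show ?thesis
    by (simp add: occ_tokens_0 occ_tokens_last)
qed

lemma occ_tokens_return: "\<tau> < L \<Longrightarrow> occ_tokens x L \<tau> = []"
  by (rule trans[OF occ_tokens_eqI[where is_first = False and is_last = False]])
    (use periodic return \<tau>_def in \<open>auto intro!: exI[of _ 0] bexI[of _ L]\<close>)

lemma rest_eq: "\<tau> < L \<Longrightarrow> rest = concat (map (occ_tokens x L) [Suc \<tau>..<L])"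
  unfolding rest_def by (simp add: upt_conv_Cons occ_tokens_return)

lemma occ_tokens_Suc_return:
  "occ_tokens (x \<circ> Suc) L (Suc p) = Lab (x 0) # (if \<tau> < L then [] else [Close])"
proof (rule trans[OF occ_tokens_eqI[where is_first = True and is_last = "\<not> \<tau> < L"]])
  show "(\<forall>s<Suc p. (x \<circ> Suc) s \<noteq> (x \<circ> Suc) (Suc p)) = True"
    using return no_early_return \<tau>_def by auto
  show "(\<forall>s\<in>{Suc p<..L}. (x \<circ> Suc) s \<noteq> (x \<circ> Suc) (Suc p)) = (\<not> \<tau> < L)"
  proof (cases "\<tau> < L")
    case True
    then show ?thesis
      using periodic return \<tau>_def by (auto intro!: bexI[of _ "L - 1"])
  next
    case False
    then have "{Suc p<..L} = {L}"
      using return_le \<tau>_def by auto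
    then show ?thesis
      using False periodic first_edge_not_loop return_le \<tau>_def by simp
  qed
qed (use return \<tau>_def in simp)

lemma occ_tokens_Suc_after_return:
  assumes "\<tau> \<le> t" "t < L - 1"
  shows "occ_tokens (x \<circ> Suc) L t = occ_tokens x L (Suc t)"
proof (rule occ_tokens_cong)
  show "(\<forall>s<t. (x \<circ> Suc) s \<noteq> (x \<circ> Suc) t) = (\<forall>s<Suc t. x s \<noteq> x (Suc t))"
  proof
    assume first: "\<forall>s<t. (x \<circ> Suc) s \<noteq> (x \<circ> Suc) t"
    have "x 0 \<noteq> x (Suc t)"
      using first return assms \<tau>_def by (metis Suc_le_lessD comp_apply)
    then show "\<forall>s<Suc t. x s \<noteq> x (Suc t)"
      using first by (metis comp_apply less_Suc_eq_0_disj not_less_eq)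
  qed auto
  have "x (Suc L) \<noteq> x (Suc t)"
    using branch_separated[of 1 "Suc t"] periodic assms \<tau>_def by auto
  then show "(\<forall>s\<in>{t<..L}. (x \<circ> Suc) s \<noteq> (x \<circ> Suc) t) = (\<forall>s\<in>{Suc t<..L}. x s \<noteq> x (Suc t))"
    unfolding comp_apply all_after_Suc_shift using assms by (auto simp: le_Suc_eq)
qed simp

lemma occ_tokens_Suc_before_end: "\<tau> < L \<Longrightarrow> occ_tokens (x \<circ> Suc) L (L - 1) = [Close]"
proof (rule trans[OF occ_tokens_eqI[where is_first = False and is_last = True]])
  assume "\<tau> < L"
  then have "x (Suc (Suc p)) = x (Suc (L - 1))"
    using periodic return \<tau>_def by simp
  then show "(\<forall>s<L - 1. (x \<circ> Suc) s \<noteq> (x \<circ> Suc) (L - 1)) = False"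
    using \<open>\<tau> < L\<close> \<tau>_def by (auto intro!: exI[of _ "Suc p"])
  have "{L - 1<..L} = {L}"
    using \<open>\<tau> < L\<close> by auto
  then show "(\<forall>s\<in>{L - 1<..L}. (x \<circ> Suc) s \<noteq> (x \<circ> Suc) (L - 1)) = True"
    using periodic first_edge_not_loop \<open>\<tau> < L\<close> by simp
qed simp

lemma occ_string_Suc_tail:
  "concat (map (occ_tokens (x \<circ> Suc) L) [Suc p..<Suc L]) = Lab (x 0) # rest @ [Close, Close]"
proof (cases "\<tau> < L")
  case True
  have "concat (map (occ_tokens (x \<circ> Suc) L) [\<tau>..<L - 1]) = rest"
    unfolding rest_eq[OF True] using True occ_tokens_Suc_after_return
    by (subst concat_map_upt_Suc_shift) (auto simp: Suc_diff_1)
  moreover have "[Suc p..<Suc L] = Suc p # [\<tau>..<L - 1] @ [L - 1, L]"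
  proof -
    have "[\<tau>..<L] = [\<tau>..<L - 1] @ [L - 1]"
      using upt_Suc_append[of \<tau> "L - 1"] True by simp
    then show ?thesis
      using upt_conv_Cons[of "Suc p" "Suc L"] upt_Suc_append[of \<tau> L] return_le \<tau>_def
      by (simp del: upt_Suc)
  qed
  ultimately show ?thesis
    using True occ_tokens_Suc_return occ_tokens_Suc_before_end occ_tokens_last by simp
next
  case False
  then have "L = \<tau>"
    using return_le by simp
  then have "[Suc p..<Suc L] = [Suc p, L]" "rest = []"
    unfolding rest_def \<tau>_def by simp_all
  then show ?thesis
    using False occ_tokens_Suc_return occ_tokens_last by simp
qed

lemma occ_string_Suc_eq: "occ_string (x \<circ> Suc) L = branch @ Lab (x 0) # rest @ [Close, Close]"
proof -
  have "[0..<Suc L] = [0..<Suc p] @ [Suc p..<Suc L]"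
    using return_le \<tau>_def by (intro upt_split) simp_all
  then show ?thesis
    unfolding occ_string_def branch_def occ_string_Suc_tail[symmetric] by simp
qed

lemma i_value_occ_string_Suc:
  assumes "even (card (x ` {0..<Suc L}))"
  shows "i_value e0 (occ_string (x \<circ> Suc) L)
       = (i_value e0 (occ_string x L) + card (x ` {0..<Suc L}) div 2) mod 2"
proof -
  have "card (x ` {0..<Suc L}) = 1 + num_labels branch + num_labels rest"
    using num_labels_occ_string[of x L] unfolding occ_string_eq by simp
  then show ?thesis
    unfolding occ_string_eq occ_string_Suc_eq
    using i_value_move_root[OF root_notin_branch num_labels_branch _ assms] by simp
qed

end

section \<open>Edges of trees are bridges\<close>

fun edge_of :: "vtx \<times> vtx \<Rightarrow> nat \<times> nat" where
  "edge_of (W i, B j) = (i, j)"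
| "edge_of (B j, W i) = (i, j)"
| "edge_of _ = (0, 0)"

lemma adj_iff:
  "(u, v) \<in> adj F \<longleftrightarrow> (\<exists>i j. (i, j) \<in> F \<and> (u = W i \<and> v = B j \<or> u = B j \<and> v = W i))"
  unfolding adj_def by auto

lemma adj_sym: "(u, v) \<in> adj F \<Longrightarrow> (v, u) \<in> adj F"
  unfolding adj_iff by blast

lemma adj_edge_of:
  "(u, v) \<in> adj F \<Longrightarrow> edge_of (u, v) \<in> F \<and>
    (u = W (fst (edge_of (u, v))) \<and> v = B (snd (edge_of (u, v)))
     \<or> u = B (snd (edge_of (u, v))) \<and> v = W (fst (edge_of (u, v))))"
  unfolding adj_iff by auto

lemma adj_subset_vertices: "F \<subseteq> {1..n} \<times> {1..m} \<Longrightarrow> adj F \<subseteq> vertices n m \<times> vertices n m"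
  unfolding adj_def vertices_def by auto

lemma adj_Diff_edge: "adj (F - {(i, j)}) = adj F - {(W i, B j), (B j, W i)}"
  unfolding adj_def by auto

lemma finite_vertices: "finite (vertices n m)"
  unfolding vertices_def by simp

lemma card_vertices: "card (vertices n m) = n + m"
proof -
  have "card (W ` {1..n} \<union> B ` {1..m}) = card (W ` {1..n}) + card (B ` {1..m})"
    by (rule card_Un_disjoint) auto
  also have "\<dots> = n + m"
    by (simp add: card_image inj_on_def)
  finally show ?thesis
    unfolding vertices_def .
qed

lemma card_adj: "finite F \<Longrightarrow> card (adj F) = 2 * card F"
proof -
  assume "finite F"
  have "adj F = (\<lambda>(i, j). (W i, B j)) ` F \<union> (\<lambda>(i, j). (B j, W i)) ` F"
    unfolding adj_def by auto
  then have "card (adj F) = card ((\<lambda>(i, j). (W i, B j)) ` F) + card ((\<lambda>(i, j). (B j, W i)) ` F)"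
    using \<open>finite F\<close> by (simp add: card_Un_disjoint, subst card_Un_disjoint) auto
  also have "\<dots> = card F + card F"
    by (subst card_image, force simp: inj_on_def, subst card_image) (auto simp: inj_on_def)
  finally show ?thesis
    by simp
qed

lemma rtrancl_in_vertices: "(u, v) \<in> R\<^sup>* \<Longrightarrow> R \<subseteq> V \<times> V \<Longrightarrow> u \<in> V \<Longrightarrow> v \<in> V"
  by (induct rule: rtrancl_induct) auto

lemma relpow_Least_parent:
  assumes "(a, v) \<in> R ^^ k" and "v \<noteq> a"
  shows "\<exists>u. (u, v) \<in> R \<and> Suc (LEAST k. (a, u) \<in> R ^^ k) = (LEAST k. (a, v) \<in> R ^^ k)"
proof -
  define dist where "dist w = (LEAST k. (a, w) \<in> R ^^ k)" for w
  have dist: "(a, v) \<in> R ^^ dist v"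
    unfolding dist_def using assms(1) by (rule LeastI)
  moreover have "dist v \<noteq> 0"
  proof
    assume "dist v = 0"
    then show False
      using dist assms(2) by simp
  qed
  then obtain j where j: "dist v = Suc j"
    using not0_implies_Suc by blast
  ultimately have "(a, v) \<in> R ^^ Suc j"
    by simp
  then obtain u where u: "(a, u) \<in> R ^^ j" "(u, v) \<in> R"
    by (rule relpow_Suc_E)
  have "(a, u) \<in> R ^^ dist u"
    unfolding dist_def using u(1) by (rule LeastI)
  then have "(a, v) \<in> R ^^ Suc (dist u)"
    using u(2) by (rule relpow_Suc_I)
  then have "dist v \<le> Suc (dist u)"
    unfolding dist_def by (rule Least_le)
  moreover have "dist u \<le> j"
    unfolding dist_def using u(1) by (rule Least_le)
  ultimately show ?thesis
    using u(2) j unfolding dist_def by (intro exI[of _ u]) simp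
qed

text \<open>Each vertex other than \<open>v0\<close> is mapped injectively to the edge through which a shortest
  path from \<open>v0\<close> enters it.\<close>
lemma connected_card_vertices_le:
  assumes F: "F \<subseteq> {1..n} \<times> {1..m}" and v0: "v0 \<in> vertices n m"
    and conn: "\<And>v. v \<in> vertices n m \<Longrightarrow> (v0, v) \<in> (adj F)\<^sup>*"
  shows "card (vertices n m) \<le> card F + 1"
proof -
  let ?V = "vertices n m" and ?R = "adj F"
  define dist where "dist v = (LEAST k. (v0, v) \<in> ?R ^^ k)" for v
  have parent: "\<exists>u. (u, v) \<in> ?R \<and> Suc (dist u) = dist v" if v: "v \<in> ?V - {v0}" for v
  proof -
    obtain k where "(v0, v) \<in> ?R ^^ k"
      using conn v rtrancl_power by blast
    then show ?thesis
      unfolding dist_def by (rule relpow_Least_parent) (use v in blast)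
  qed
  define pr where "pr v = (SOME u. (u, v) \<in> ?R \<and> Suc (dist u) = dist v)" for v
  have pr: "(pr v, v) \<in> ?R" "Suc (dist (pr v)) = dist v" if "v \<in> ?V - {v0}" for v
    using someI_ex[OF parent[OF that]] unfolding pr_def by auto
  have "inj_on (\<lambda>v. edge_of (pr v, v)) (?V - {v0})"
  proof (rule inj_onI)
    fix v v' assume v: "v \<in> ?V - {v0}" and v': "v' \<in> ?V - {v0}"
      and eq: "edge_of (pr v, v) = edge_of (pr v', v')"
    show "v = v'"
    proof (rule ccontr)
      assume "v \<noteq> v'"
      then have "pr v = v' \<and> pr v' = v"
        using adj_edge_of[OF pr(1)[OF v]] adj_edge_of[OF pr(1)[OF v']] eq by auto
      then show False
        using pr(2)[OF v] pr(2)[OF v'] by auto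
    qed
  qed
  moreover have "(\<lambda>v. edge_of (pr v, v)) ` (?V - {v0}) \<subseteq> F"
  proof (rule image_subsetI)
    fix v assume "v \<in> ?V - {v0}"
    then show "edge_of (pr v, v) \<in> F"
      using adj_edge_of[OF pr(1)] by blast
  qed
  moreover have "finite F"
    using F by (rule finite_subset) simp
  ultimately have "card (?V - {v0}) \<le> card F"
    by (rule card_inj_on_le)
  moreover have "card (?V - {v0}) = card ?V - 1" "card ?V > 0"
    using v0 finite_vertices[of n m] by (auto simp: card_gt_0_iff)
  ultimately show ?thesis
    by linarith
qed

definition adj_without :: "(nat \<times> nat) set \<Rightarrow> vtx \<Rightarrow> vtx \<Rightarrow> (vtx \<times> vtx) set" where
  "adj_without E x y = adj E - {(x, y), (y, x)}"

lemma adj_without_sym: "(u, v) \<in> adj_without E x y \<Longrightarrow> (v, u) \<in> adj_without E x y"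
  unfolding adj_without_def using adj_sym by blast

lemma adj_without_commute: "adj_without E y x = adj_without E x y"
  unfolding adj_without_def by auto

lemma adj_subset_rtrancl_adj_without:
  assumes "(x, y) \<in> (adj_without E x y)\<^sup>*"
  shows "adj E \<subseteq> (adj_without E x y)\<^sup>*"
proof
  have "sym (adj_without E x y)"
    by (rule symI) (rule adj_without_sym)
  then have "(y, x) \<in> (adj_without E x y)\<^sup>*"
    using assms by (rule symD[OF sym_rtrancl])
  fix p assume "p \<in> adj E"
  then show "p \<in> (adj_without E x y)\<^sup>*"
    using assms \<open>(y, x) \<in> _\<close> unfolding adj_without_def by (cases "p \<in> {(x, y), (y, x)}") auto
qed

lemma tree_edge_bridge_WB:
  assumes T: "is_tree n m E" and ij: "(i, j) \<in> E"
  shows "(W i, B j) \<notin> (adj_without E (W i) (B j))\<^sup>*"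
proof
  assume path: "(W i, B j) \<in> (adj_without E (W i) (B j))\<^sup>*"
  let ?F = "E - {(i, j)}" and ?V = "vertices n m"
  have Esub: "E \<subseteq> {1..n} \<times> {1..m}" and cE: "card E + 1 = n + m"
    and conn: "\<forall>x\<in>?V. \<forall>y\<in>?V. (x, y) \<in> (adj E)\<^sup>*"
    using T unfolding is_tree_def by auto
  have "adj ?F = adj_without E (W i) (B j)"
    unfolding adj_Diff_edge adj_without_def ..
  then have closure: "(adj E)\<^sup>* \<subseteq> (adj ?F)\<^sup>*"
    using rtrancl_subset_rtrancl adj_subset_rtrancl_adj_without[OF path] by metis
  have "W i \<in> ?V"
    using Esub ij unfolding vertices_def by auto
  moreover have "(W i, v) \<in> (adj ?F)\<^sup>*" if "v \<in> ?V" for v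
    using conn \<open>W i \<in> ?V\<close> that closure by auto
  moreover have "?F \<subseteq> {1..n} \<times> {1..m}"
    using Esub by blast
  ultimately have "card ?V \<le> card ?F + 1"
    by (intro connected_card_vertices_le)
  moreover have "card ?F + 1 = card E"
  proof -
    have "finite E"
      using Esub by (rule finite_subset) simp
    then have "0 < card E"
      using ij card_gt_0_iff by blast
    then show ?thesis
      using ij \<open>finite E\<close> by simp
  qed
  ultimately show False
    using cE card_vertices[of n m] by linarith
qed

lemma tree_edge_bridge:
  assumes "is_tree n m E" and "(x, y) \<in> adj E"
  shows "(y, x) \<notin> (adj_without E x y)\<^sup>*"
proof -
  obtain i j where ij: "(i, j) \<in> E" "x = W i \<and> y = B j \<or> x = B j \<and> y = W i"
    using assms(2) unfolding adj_iff by blast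
  have WB: "(W i, B j) \<notin> (adj_without E (W i) (B j))\<^sup>*"
    using tree_edge_bridge_WB[OF assms(1) ij(1)] .
  have "sym (adj_without E (W i) (B j))"
    by (rule symI) (rule adj_without_sym)
  then have BW: "(B j, W i) \<notin> (adj_without E (W i) (B j))\<^sup>*"
    using WB by (auto dest: symD[OF sym_rtrancl])
  from ij(2) show ?thesis
  proof
    assume "x = W i \<and> y = B j"
    then show ?thesis
      using BW by simp
  next
    assume "x = B j \<and> y = W i"
    then show ?thesis
      using WB adj_without_commute by simp
  qed
qed

section \<open>The contour walk runs through every dart\<close>

lemma step_Pair: "step rot (x, y) = (y, rot y x)"
  unfolding step_def by simp

lemma adj_irrefl: "(x, y) \<in> adj E \<Longrightarrow> x \<noteq> y"
  unfolding adj_iff by auto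

lemma nbrs_iff: "z \<in> nbrs E y \<longleftrightarrow> (y, z) \<in> adj E"
  unfolding nbrs_def by simp

lemma funpow_apply_add: "(f ^^ a) ((f ^^ b) x) = (f ^^ (a + b)) x"
  by (simp add: funpow_add)

lemma funpow_mult_fixed: "(f ^^ p) d = d \<Longrightarrow> (f ^^ (p * q)) d = d"
proof (induct q)
  case (Suc q)
  have "(f ^^ (p * Suc q)) d = (f ^^ p) ((f ^^ (p * q)) d)"
    by (simp add: funpow_add)
  then show ?case
    using Suc by simp
qed simp

locale plane_labelled_tree =
  fixes n m :: nat and E :: "(nat \<times> nat) set" and rot :: "vtx \<Rightarrow> vtx \<Rightarrow> vtx"
  assumes plane: "plane_tree n m E rot"
begin

lemma tree: "is_tree n m E"
  using plane unfolding plane_tree_def by simp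

lemma rotation: "is_rotation E rot"
  using plane unfolding plane_tree_def by simp

lemma edges_subset: "E \<subseteq> {1..n} \<times> {1..m}"
  using tree unfolding is_tree_def by simp

lemma connected: "x \<in> vertices n m \<Longrightarrow> y \<in> vertices n m \<Longrightarrow> (x, y) \<in> (adj E)\<^sup>*"
  using tree unfolding is_tree_def by simp

lemma adj_in_vertices: "(x, y) \<in> adj E \<Longrightarrow> x \<in> vertices n m \<and> y \<in> vertices n m"
  using adj_subset_vertices[OF edges_subset] by auto

lemma finite_adj: "finite (adj E)"
  by (rule finite_subset[OF adj_subset_vertices[OF edges_subset]]) (simp add: finite_vertices)

lemma card_adj_eq: "card (adj E) = 2 * (n + m - 1)"
proof -
  have "finite E"
    using edges_subset by (rule finite_subset) simp
  then have "card (adj E) = 2 * card E"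
    by (rule card_adj)
  moreover have "card E + 1 = n + m"
    using tree unfolding is_tree_def by simp
  ultimately show ?thesis
    by simp
qed

lemma adj_rot: "(x, y) \<in> adj E \<Longrightarrow> (y, rot y x) \<in> adj E"
proof -
  assume "(x, y) \<in> adj E"
  then have "x \<in> nbrs E y"
    using adj_sym nbrs_iff by blast
  then have "rot y x \<in> nbrs E y"
    using rotation unfolding is_rotation_def by (meson bij_betw_apply)
  then show ?thesis
    using nbrs_iff by blast
qed

lemma step_in_adj: "d \<in> adj E \<Longrightarrow> step rot d \<in> adj E"
  by (cases d) (simp add: step_Pair adj_rot)

lemma funpow_step_in_adj: "d \<in> adj E \<Longrightarrow> (step rot ^^ k) d \<in> adj E"
  by (induct k) (auto simp: step_in_adj)

lemma inj_on_step: "inj_on (step rot) (adj E)"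
proof (rule inj_onI)
  fix a b assume a: "a \<in> adj E" and b: "b \<in> adj E" and eq: "step rot a = step rot b"
  obtain x y x' y' where xy: "a = (x, y)" "b = (x', y')"
    by (cases a, cases b)
  have yy: "y = y'" and rr: "rot y x = rot y x'"
    using eq unfolding xy step_Pair by auto
  have "x \<in> nbrs E y" "x' \<in> nbrs E y"
    using a b adj_sym nbrs_iff unfolding xy yy by blast+
  moreover have "inj_on (rot y) (nbrs E y)"
    using rotation unfolding is_rotation_def bij_betw_def by blast
  ultimately have "x = x'"
    using rr by (meson inj_onD)
  then show "a = b"
    using xy yy by simp
qed

lemma funpow_step_cancel:
  "a \<in> adj E \<Longrightarrow> b \<in> adj E \<Longrightarrow> (step rot ^^ i) a = (step rot ^^ i) b \<Longrightarrow> a = b"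
proof (induct i arbitrary: a b)
  case (Suc i)
  have "(step rot ^^ i) (step rot a) = (step rot ^^ i) (step rot b)"
    using Suc.prems(3) by (simp add: funpow_Suc_right del: funpow.simps)
  then have "step rot a = step rot b"
    using Suc.hyps Suc.prems step_in_adj by blast
  then show ?case
    using inj_on_step Suc.prems by (meson inj_onD)
qed simp

text \<open>Pigeonhole on the finitely many darts, then cancellation of the injective step.\<close>
lemma step_periodic: "d \<in> adj E \<Longrightarrow> \<exists>p>0. (step rot ^^ p) d = d"
proof -
  assume d: "d \<in> adj E"
  let ?f = "\<lambda>k. (step rot ^^ k) d"
  have "\<not> inj_on ?f {0..card (adj E)}"
  proof
    assume "inj_on ?f {0..card (adj E)}"
    then have "card {0..card (adj E)} \<le> card (adj E)"
      by (rule card_inj_on_le) (use funpow_step_in_adj[OF d] finite_adj in auto)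
    then show False
      by simp
  qed
  then obtain i j where ij: "i < j" "?f i = ?f j"
    unfolding inj_on_def by (metis nat_neq_iff)
  then have "(step rot ^^ i) ((step rot ^^ (j - i)) d) = (step rot ^^ i) d"
    by (simp add: funpow_apply_add)
  then have "(step rot ^^ (j - i)) d = d"
    by (rule funpow_step_cancel[OF funpow_step_in_adj[OF d] d])
  then show ?thesis
    using ij by (intro exI[of _ "j - i"]) auto
qed

lemma rotation_cycle_induct:
  assumes "x \<in> nbrs E y" and "P (rot y x)"
    and step: "\<And>z. z \<in> nbrs E y \<Longrightarrow> z \<noteq> x \<Longrightarrow> P z \<Longrightarrow> P (rot y z)"
  shows "P x"
proof -
  have rot_nbrs: "rot y z \<in> nbrs E y" if "z \<in> nbrs E y" for z
    using rotation that unfolding is_rotation_def by (meson bij_betw_apply)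
  obtain j where j: "(rot y ^^ j) (rot y x) = x"
    using rotation assms(1) rot_nbrs[OF assms(1)] unfolding is_rotation_def by blast
  have "P x \<or> P ((rot y ^^ i) (rot y x)) \<and> (rot y ^^ i) (rot y x) \<in> nbrs E y" for i
  proof (induct i)
    case (Suc i)
    then show ?case
      using step rot_nbrs by (cases "(rot y ^^ i) (rot y x) = x") auto
  qed (use assms(2) rot_nbrs[OF assms(1)] in simp)
  then show "P x"
    using j by metis
qed

definition reaches :: "vtx \<times> vtx \<Rightarrow> vtx \<times> vtx \<Rightarrow> bool" where
  "reaches d d' \<longleftrightarrow> (\<exists>k. (step rot ^^ k) d = d')"

lemma reaches_refl: "reaches d d"
  unfolding reaches_def by (rule exI[of _ 0]) simp

lemma reaches_trans: "reaches a b \<Longrightarrow> reaches b c \<Longrightarrow> reaches a c"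
  unfolding reaches_def by (metis comp_apply funpow_add)

lemma reaches_step: "reaches a b \<Longrightarrow> reaches a (step rot b)"
  unfolding reaches_def by (metis funpow.simps(2) comp_apply)

lemma reaches_in_adj: "d \<in> adj E \<Longrightarrow> reaches d d' \<Longrightarrow> d' \<in> adj E"
  unfolding reaches_def using funpow_step_in_adj by blast

definition subtree :: "vtx \<Rightarrow> vtx \<Rightarrow> vtx set" where
  "subtree x y = {v. (y, v) \<in> (adj_without E x y)\<^sup>*}"

lemma finite_subtree: "(x, y) \<in> adj E \<Longrightarrow> finite (subtree x y)"
proof -
  assume xy: "(x, y) \<in> adj E"
  have "adj_without E x y \<subseteq> vertices n m \<times> vertices n m"
    unfolding adj_without_def using adj_subset_vertices[OF edges_subset] by blast
  then have "subtree x y \<subseteq> vertices n m"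
    unfolding subtree_def using adj_in_vertices[OF xy] by (auto intro: rtrancl_in_vertices)
  then show ?thesis
    using finite_vertices by (rule finite_subset)
qed

lemma subtree_subset:
  assumes xy: "(x, y) \<in> adj E" and yz: "(y, z) \<in> adj E" and "z \<noteq> x"
  shows "subtree y z \<subseteq> subtree x y"
proof
  have bridge: "(z, y) \<notin> (adj_without E y z)\<^sup>*"
    by (rule tree_edge_bridge[OF tree yz])
  fix v assume "v \<in> subtree y z"
  then have "(z, v) \<in> (adj_without E y z)\<^sup>*"
    unfolding subtree_def by simp
  then have "(y, v) \<in> (adj_without E x y)\<^sup>*"
  proof (induct rule: rtrancl_induct)
    case base
    have "(y, z) \<in> adj_without E x y"
      unfolding adj_without_def using yz \<open>z \<noteq> x\<close> adj_irrefl[OF xy] by auto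
    then show ?case
      by auto
  next
    case (step w w')
    have "(w, w') \<noteq> (x, y)"
    proof
      assume "(w, w') = (x, y)"
      then have "(z, y) \<in> (adj_without E y z)\<^sup>*"
        using step(1,2) by auto
      then show False
        using bridge by simp
    qed
    moreover have "(w, w') \<noteq> (y, x)"
    proof
      assume "(w, w') = (y, x)"
      then have "(z, y) \<in> (adj_without E y z)\<^sup>*"
        using step(1) by auto
      then show False
        using bridge by simp
    qed
    moreover have "(w, w') \<in> adj E"
      using step(2) unfolding adj_without_def by simp
    ultimately have "(w, w') \<in> adj_without E x y"
      unfolding adj_without_def by simp
    then show ?case
      using step(3) by auto
  qed
  then show "v \<in> subtree x y"
    unfolding subtree_def by simp
qed

lemma subtree_psubset:
  assumes "(x, y) \<in> adj E" and yz: "(y, z) \<in> adj E" and "z \<noteq> x"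
  shows "subtree y z \<subset> subtree x y"
proof -
  have "y \<in> subtree x y" "y \<notin> subtree y z"
    using tree_edge_bridge[OF tree yz] unfolding subtree_def by simp_all
  then show ?thesis
    using subtree_subset[OF assms] by blast
qed

text \<open>Induction on the size of the subtree behind the dart: the walk turns around $y$ through
  the darts $(y, z)$ for all neighbours $z$ in rotation order, each of which returns by induction.\<close>
lemma reaches_reverse: "(x, y) \<in> adj E \<Longrightarrow> reaches (x, y) (y, x)"
proof (induction "card (subtree x y)" arbitrary: x y rule: less_induct)
  case less
  have "x \<in> nbrs E y"
    using less.prems adj_sym nbrs_iff by blast
  then show ?case
  proof (rule rotation_cycle_induct[where P = "\<lambda>z. reaches (x, y) (y, z)"])
    show "reaches (x, y) (y, rot y x)"
      unfolding reaches_def by (rule exI[of _ 1]) (simp add: step_Pair)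
    fix z assume z: "z \<in> nbrs E y" "z \<noteq> x" and "reaches (x, y) (y, z)"
    have "(y, z) \<in> adj E"
      using z(1) nbrs_iff by blast
    then have "card (subtree y z) < card (subtree x y)"
      using psubset_card_mono[OF finite_subtree subtree_psubset] less.prems z(2) by blast
    then have "reaches (y, z) (z, y)"
      using less.hyps \<open>(y, z) \<in> adj E\<close> by blast
    then have "reaches (y, z) (y, rot y z)"
      using reaches_step step_Pair by metis
    then show "reaches (x, y) (y, rot y z)"
      using \<open>reaches (x, y) (y, z)\<close> reaches_trans by blast
  qed
qed

lemma reaches_same_tail:
  assumes "(u, v) \<in> adj E" and "(u, w) \<in> adj E"
  shows "reaches (u, v) (u, w)"
proof -
  have turn: "reaches (u, v) (u, (rot u ^^ i) v)" for i
  proof (induct i)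
    case (Suc i)
    have "(u, (rot u ^^ i) v) \<in> adj E"
      using reaches_in_adj[OF assms(1) Suc] .
    then have "reaches (u, (rot u ^^ i) v) ((rot u ^^ i) v, u)"
      by (rule reaches_reverse)
    then have "reaches (u, v) ((rot u ^^ i) v, u)"
      using Suc reaches_trans by blast
    then show ?case
      using reaches_step by (fastforce simp: step_Pair)
  qed (simp add: reaches_refl)
  have "v \<in> nbrs E u" "w \<in> nbrs E u"
    using assms nbrs_iff by blast+
  then obtain j where "(rot u ^^ j) v = w"
    using rotation unfolding is_rotation_def by blast
  then show ?thesis
    using turn by blast
qed

lemma reaches_all:
  assumes d: "d \<in> adj E" and d': "d' \<in> adj E"
  shows "reaches d d'"
proof -
  obtain r e u w where re: "d = (r, e)" and uw: "d' = (u, w)"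
    by (cases d, cases d')
  have "(r, u) \<in> (adj E)\<^sup>*"
    using connected adj_in_vertices d d' re uw by simp
  then have "\<exists>v. (u, v) \<in> adj E \<and> reaches d (u, v)"
  proof (induct rule: rtrancl_induct)
    case base
    show ?case
      using d re reaches_refl by blast
  next
    case (step u u')
    then obtain v where v: "(u, v) \<in> adj E" "reaches d (u, v)"
      by blast
    then have "reaches d (u, u')"
      using reaches_same_tail step(2) reaches_trans by blast
    then have "reaches d (u', u)"
      using reaches_reverse step(2) reaches_trans by blast
    then show ?case
      using adj_sym[OF step(2)] by blast
  qed
  then show ?thesis
    using reaches_same_tail d' uw reaches_trans by blast
qed

lemma inj_on_funpow_step:
  assumes d: "d \<in> adj E" and no_return: "\<And>k. 0 < k \<Longrightarrow> k < p \<Longrightarrow> (step rot ^^ k) d \<noteq> d"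
  shows "inj_on (\<lambda>k. (step rot ^^ k) d) {..<p}"
proof (rule inj_onI, rule ccontr)
  have no_repeat: False if ij: "i < j" "j < p" "(step rot ^^ i) d = (step rot ^^ j) d" for i j
  proof -
    have "(step rot ^^ i) ((step rot ^^ (j - i)) d) = (step rot ^^ i) d"
      using ij by (simp add: funpow_apply_add)
    then have "(step rot ^^ (j - i)) d = d"
      by (rule funpow_step_cancel[OF funpow_step_in_adj[OF d] d])
    then show False
      using no_return[of "j - i"] ij by simp
  qed
  fix i j assume "i \<in> {..<p}" "j \<in> {..<p}" "(step rot ^^ i) d = (step rot ^^ j) d" "i \<noteq> j"
  then show False
    using no_repeat[of i j] no_repeat[of j i] by (cases "i < j") auto
qed

lemma funpow_step_image:
  assumes d: "d \<in> adj E" and "0 < p" and period: "(step rot ^^ p) d = d"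
  shows "(\<lambda>k. (step rot ^^ k) d) ` {..<p} = adj E"
proof
  show "(\<lambda>k. (step rot ^^ k) d) ` {..<p} \<subseteq> adj E"
    using funpow_step_in_adj[OF d] by blast
  show "adj E \<subseteq> (\<lambda>k. (step rot ^^ k) d) ` {..<p}"
  proof
    fix d' assume "d' \<in> adj E"
    then obtain k where k: "(step rot ^^ k) d = d'"
      using reaches_all[OF d] unfolding reaches_def by blast
    have "(step rot ^^ (k mod p)) d = (step rot ^^ (k mod p)) ((step rot ^^ (p * (k div p))) d)"
      using funpow_mult_fixed[OF period, of "k div p"] by simp
    also have "\<dots> = d'"
      using k by (simp add: funpow_apply_add mod_mult_div_eq)
    finally show "d' \<in> (\<lambda>k. (step rot ^^ k) d) ` {..<p}"
      using \<open>0 < p\<close> by (intro rev_image_eqI[of "k mod p"]) simp_all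
  qed
qed

lemma walk_orbit:
  assumes d: "d \<in> adj E"
  shows "(step rot ^^ card (adj E)) d = d"
    and "inj_on (\<lambda>k. (step rot ^^ k) d) {..<card (adj E)}"
    and "(\<lambda>k. (step rot ^^ k) d) ` {..<card (adj E)} = adj E"
proof -
  define p where "p = (LEAST p. 0 < p \<and> (step rot ^^ p) d = d)"
  have p: "0 < p" "(step rot ^^ p) d = d"
    using LeastI_ex[OF step_periodic[OF d]] unfolding p_def by auto
  have "(step rot ^^ k) d \<noteq> d" if "0 < k" "k < p" for k
    using not_less_Least[of k "\<lambda>p. 0 < p \<and> (step rot ^^ p) d = d"] that unfolding p_def by blast
  then have inj: "inj_on (\<lambda>k. (step rot ^^ k) d) {..<p}"
    by (rule inj_on_funpow_step[OF d])
  have img: "(\<lambda>k. (step rot ^^ k) d) ` {..<p} = adj E"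
    by (rule funpow_step_image[OF d p])
  have "card (adj E) = p"
    using card_image[OF inj] img by simp
  then show "(step rot ^^ card (adj E)) d = d" "inj_on (\<lambda>k. (step rot ^^ k) d) {..<card (adj E)}"
    "(\<lambda>k. (step rot ^^ k) d) ` {..<card (adj E)} = adj E"
    using p inj img by simp_all
qed

end

locale rooted_plane_tree = plane_labelled_tree +
  fixes r e :: vtx
  assumes root_dart: "(r, e) \<in> adj E"
begin

definition dart :: "nat \<Rightarrow> vtx \<times> vtx" where
  "dart t = (step rot ^^ t) (r, e)"

definition return_time :: nat where
  "return_time = (LEAST k. dart k = (e, r))"

lemma dart_in_adj: "dart t \<in> adj E"
  unfolding dart_def using funpow_step_in_adj[OF root_dart] .

lemma dart_eq_occ: "dart t = (occ rot r e t, occ rot r e (Suc t))"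
proof -
  have "occ rot r e t = fst (dart t)" "occ rot r e (Suc t) = fst (step rot (dart t))"
    unfolding occ_def dart_def by simp_all
  then show ?thesis
    by (cases "dart t") (simp add: step_Pair)
qed

lemma dart_period: "dart (2 * (n + m - 1)) = (r, e)"
  and inj_on_dart: "inj_on dart {..<2 * (n + m - 1)}"
  and dart_image: "dart ` {..<2 * (n + m - 1)} = adj E"
  using walk_orbit[OF root_dart] unfolding dart_def card_adj_eq by simp_all

lemma occ_period: "occ rot r e (2 * (n + m - 1)) = occ rot r e 0"
  "occ rot r e (Suc (2 * (n + m - 1))) = occ rot r e 1"
  using dart_eq_occ[of "2 * (n + m - 1)"] dart_eq_occ[of 0] dart_period
  unfolding dart_def by auto

lemma dart_return_time: "dart return_time = (e, r)"
  and return_time_pos: "0 < return_time"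
  and return_time_less: "return_time < 2 * (n + m - 1)"
proof -
  obtain k where k: "k < 2 * (n + m - 1)" "dart k = (e, r)"
    using dart_image adj_sym[OF root_dart] by (metis imageE lessThan_iff)
  then show "dart return_time = (e, r)"
    unfolding return_time_def using LeastI[where P = "\<lambda>k. dart k = (e, r)", OF k(2)] by simp
  show "return_time < 2 * (n + m - 1)"
    using Least_le[where P = "\<lambda>k. dart k = (e, r)", OF k(2)] k(1) unfolding return_time_def by simp
  have "dart 0 = (r, e)" "r \<noteq> e"
    unfolding dart_def using adj_irrefl[OF root_dart] by simp_all
  then show "0 < return_time"
    using \<open>dart return_time = (e, r)\<close> by (metis gr0I prod.inject)
qed

lemma dart_adj_without:
  assumes "0 < t" "t < 2 * (n + m - 1)" "t \<noteq> return_time"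
  shows "dart t \<in> adj_without E r e"
proof -
  have t: "t \<in> {..<2 * (n + m - 1)}" "0 \<in> {..<2 * (n + m - 1)}"
    using assms(1,2) by auto
  have "dart t \<noteq> dart 0"
    using inj_onD[OF inj_on_dart _ t] assms(1) by auto
  moreover have "dart t \<noteq> dart return_time"
    using inj_onD[OF inj_on_dart _ t(1)] return_time_less assms(3) by auto
  ultimately have "dart t \<noteq> (r, e)" "dart t \<noteq> (e, r)"
    using dart_return_time unfolding dart_def by simp_all
  then show ?thesis
    unfolding adj_without_def using dart_in_adj by auto
qed

lemma occ_in_subtree: "1 \<le> t \<Longrightarrow> t \<le> return_time \<Longrightarrow> occ rot r e t \<in> subtree r e"
proof (induct t)
  case (Suc t)
  show ?case
  proof (cases t)
    case 0
    then show ?thesis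
      using dart_eq_occ[of 0] unfolding dart_def subtree_def by simp
  next
    case (Suc t')
    then have "occ rot r e t \<in> subtree r e" "dart t \<in> adj_without E r e"
      using Suc.hyps Suc.prems return_time_less by (auto intro: dart_adj_without)
    then show ?thesis
      unfolding subtree_def dart_eq_occ by (auto intro: rtrancl_into_rtrancl)
  qed
qed simp

lemma occ_notin_subtree:
  "return_time < t \<Longrightarrow> t \<le> 2 * (n + m - 1) \<Longrightarrow> occ rot r e t \<notin> subtree r e"
proof (induct t)
  case (Suc t)
  have r_notin: "r \<notin> subtree r e"
    using tree_edge_bridge[OF tree root_dart] unfolding subtree_def by simp
  show ?case
  proof (cases "t = return_time")
    case True
    then show ?thesis
      using dart_eq_occ[of t] dart_return_time r_notin by simp
  next
    case False
    then have "occ rot r e t \<notin> subtree r e"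
      using Suc by simp
    moreover have "(occ rot r e (Suc t), occ rot r e t) \<in> adj_without E r e"
      using dart_adj_without[of t] False Suc.prems return_time_pos adj_without_sym
      unfolding dart_eq_occ by simp
    ultimately show ?thesis
      unfolding subtree_def by (auto intro: rtrancl_into_rtrancl)
  qed
qed simp

lemma occ_image: "occ rot r e ` {0..<Suc (2 * (n + m - 1))} = vertices n m"
proof
  show "occ rot r e ` {0..<Suc (2 * (n + m - 1))} \<subseteq> vertices n m"
    using dart_in_adj adj_in_vertices unfolding dart_eq_occ by blast
  show "vertices n m \<subseteq> occ rot r e ` {0..<Suc (2 * (n + m - 1))}"
  proof
    fix v assume v: "v \<in> vertices n m"
    obtain w where w: "w \<in> vertices n m" "w \<noteq> v"
      using adj_in_vertices[OF root_dart] adj_irrefl[OF root_dart] by blast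
    obtain u where "(v, u) \<in> adj E"
      using connected[OF v w(1)] w(2) by (metis converse_rtranclE)
    then obtain k where "k < 2 * (n + m - 1)" "dart k = (v, u)"
      using dart_image by (metis imageE lessThan_iff)
    then show "v \<in> occ rot r e ` {0..<Suc (2 * (n + m - 1))}"
      unfolding dart_eq_occ by (intro rev_image_eqI[of k]) auto
  qed
qed

lemma first_return_occ: "first_return (occ rot r e) (2 * (n + m - 1)) (return_time - 1)"
proof
  let ?x = "occ rot r e" and ?L = "2 * (n + m - 1)"
  have r_notin: "r \<notin> subtree r e"
    using tree_edge_bridge[OF tree root_dart] unfolding subtree_def by simp
  have x0: "?x 0 = r" "?x 1 = e"
    using dart_eq_occ[of 0] unfolding dart_def by auto
  have ret: "Suc (Suc (return_time - 1)) = Suc return_time"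
    using return_time_pos by simp
  show "?x ?L = ?x 0" "?x (Suc ?L) = ?x 1"
    by (fact occ_period)+
  show "Suc (Suc (return_time - 1)) \<le> ?L"
    using return_time_less ret by simp
  show "?x (Suc (Suc (return_time - 1))) = ?x 0" "?x (Suc (return_time - 1)) = ?x 1"
    using dart_return_time x0 return_time_pos unfolding dart_eq_occ ret by auto
  show "?x t \<noteq> ?x 0" if "0 < t" "t < Suc (Suc (return_time - 1))" for t
    using occ_in_subtree[of t] that r_notin x0 ret by auto
  show "?x s \<noteq> ?x t"
    if "1 \<le> s" "s < Suc (Suc (return_time - 1))" "Suc (Suc (return_time - 1)) \<le> t" "t \<le> ?L" for s t
    using occ_in_subtree[of s] occ_notin_subtree[of t] that ret by auto
qed

end

fun is_white :: "vtx \<Rightarrow> bool" where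
  "is_white (W _) = True"
| "is_white (B _) = False"

lemma mod2_add_twice: "((a + h) mod 2 + h) mod 2 = (a :: nat) mod 2"
  by presburger

context plane_labelled_tree
begin

lemma iT_step:
  assumes "(r, e) \<in> adj E" and "even (n + m)"
  shows "iT n m rot e (rot e r) = (iT n m rot r e + (n + m) div 2) mod 2"
proof -
  interpret rooted_plane_tree n m E rot r e
    using assms(1) by unfold_locales
  have shift: "occ rot e (rot e r) = occ rot r e \<circ> Suc"
    unfolding occ_def by (simp add: fun_eq_iff funpow_Suc_right step_Pair del: funpow.simps)
  have "card (occ rot r e ` {0..<Suc (2 * (n + m - 1))}) = n + m"
    unfolding occ_image card_vertices ..
  then show ?thesis
    using first_return.i_value_occ_string_Suc[OF first_return_occ] assms(2)
    unfolding iT_eq_i_value cstring_eq_occ_string shift by (simp only:)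
qed

lemma iT_step_step:
  assumes "d \<in> adj E" and "even (n + m)"
  shows "case_prod (iT n m rot) (step rot (step rot d)) = case_prod (iT n m rot) d"
proof -
  obtain r e where d: "d = (r, e)"
    by (cases d)
  have "(e, rot e r) \<in> adj E"
    using adj_rot assms(1) d by simp
  then have "iT n m rot (rot e r) (rot (rot e r) e)
      = ((iT n m rot r e + (n + m) div 2) mod 2 + (n + m) div 2) mod 2"
    using iT_step assms d by simp
  also have "\<dots> = iT n m rot r e mod 2"
    by (rule mod2_add_twice)
  also have "\<dots> = iT n m rot r e"
    unfolding iT_def Let_def by simp
  finally show ?thesis
    using d by (simp add: step_Pair)
qed

lemma iT_funpow_step_even:
  assumes "d \<in> adj E" and "even (n + m)"
  shows "case_prod (iT n m rot) ((step rot ^^ (2 * j)) d) = case_prod (iT n m rot) d"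
proof (induct j)
  case (Suc j)
  have "(step rot ^^ (2 * Suc j)) d = step rot (step rot ((step rot ^^ (2 * j)) d))"
    by simp
  then show ?case
    using iT_step_step[OF funpow_step_in_adj[OF assms(1)] assms(2)] Suc by simp
qed simp

lemma is_white_funpow_step:
  "d \<in> adj E \<Longrightarrow> is_white (fst ((step rot ^^ k) d)) \<longleftrightarrow> (is_white (fst d) \<longleftrightarrow> even k)"
proof (induct k)
  case (Suc k)
  obtain x y where xy: "(step rot ^^ k) d = (x, y)"
    by (cases "(step rot ^^ k) d")
  have "(x, y) \<in> adj E"
    using funpow_step_in_adj[OF Suc.prems] xy by metis
  then have "is_white y \<longleftrightarrow> \<not> is_white x"
    unfolding adj_iff by auto
  then show ?case
    using Suc xy by (simp add: step_Pair)
qed simp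

end

theorem mainTheorem3:
  fixes n m :: nat and E :: "(nat \<times> nat) set" and rot :: "vtx \<Rightarrow> vtx \<Rightarrow> vtx"
    and i i' :: nat and e e' :: vtx
  assumes "plane_tree n m E rot"
    and "even (n + m)"
    and "i \<in> {1..n}" and "e \<in> nbrs E (W i)"
    and "i' \<in> {1..n}" and "e' \<in> nbrs E (W i')"
  shows "iT n m rot (W i) e = iT n m rot (W i') e'"
proof -
  \<comment> \<open>The range hypotheses on \<open>i\<close> and \<open>i'\<close> follow from the neighbour hypotheses and are unused.\<close>
  interpret plane_labelled_tree n m E rot
    by (rule plane_labelled_tree.intro) (fact assms(1))
  have darts: "(W i, e) \<in> adj E" "(W i', e') \<in> adj E"
    using assms(4,6) nbrs_iff by blast+
  then obtain k where k: "(step rot ^^ k) (W i, e) = (W i', e')"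
    using reaches_all unfolding reaches_def by blast
  then have "even k"
    using is_white_funpow_step[OF darts(1), of k] by simp
  then obtain j where "k = 2 * j" ..
  then show ?thesis
    using iT_funpow_step_even[OF darts(1) assms(2), of j] k by simp
qed

end
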